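(* Let $\Gamma\subset\mathbb{R}^2$ be the half-lemniscate $\Gamma=\{(\cos 2\theta\cos\theta,\ \cos2\theta\sin\theta) : |\theta|\le\pi/4\}$ (given in polar coordinates by $r=\cos2\theta$, $|\theta|\le\pi/4$). Let $T$ be a triangle with vertices $A,B,C$ such that $|CA|=|CB|$, the segment $AB$ is vertical, $C$ lies strictly to the left of the line $AB$, and the angle of $T$ at $C$ is obtuse. Then there is no composition $\phi$ of a translation and a homothety with positive ratio such that $\phi(A),\phi(B),\phi(C)$ all lie on $\Gamma$. In particular, the conclusion of the Main Theorem (every non-flat triangle can be placed with its vertices on the curve by a translation and a positive homothety) fails for this Jordan curve, which is $\mathcal{C}^\infty$ except at the origin, where it has two tangents forming a right angle. *)

theory Defs
  imports "HOL-Analysis.Analysis"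
begin

definition half_lemniscate :: "(real \<times> real) set" where
  "half_lemniscate = {(cos (2*\<theta>) * cos \<theta>, cos (2*\<theta>) * sin \<theta>) | \<theta>. \<bar>\<theta>\<bar> \<le> pi/4}"

end

theory Submission
  imports Defs
begin

(* Parametrise the half-lemniscate by x(t) = cos 2t cos t, y(t) = cos 2t sin t,
   |t| <= pi/4.  Three facts about this curve suffice:
   (1) x is even and strictly decreasing in |t|, so two points of the curve on a common
       vertical line are mirror images (a, b) and (a, -b) in the x-axis;
   (2) every point satisfies 0 <= x <= 1 and y^2 <= x^2 (the curve lies in the right-angled
       cone |y| <= x), because x^2 - y^2 = cos^3 2t >= 0;
   (3) the curve meets the x-axis only at (0,0) and (1,0).
   If an isosceles triangle with vertical base PQ and apex R left of PQ had its vertices on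
   the curve, then by (1) its base is (a, b), (a, -b), so equidistance puts R on the x-axis
   and by (3) R = (1,0) or R = (0,0).  The first contradicts x(R) < a <= 1; the second makes
   the angle at R non-obtuse by (2).  Finally, all hypotheses on the triangle are invariant
   under translations and positive homotheties, which reduces the theorem to this case. *)

text \<open>On [0, pi/4] the x-coordinate is strictly decreasing: both factors decrease and stay
  non-negative.\<close>
lemma lemniscate_x_strict_decreasing:
  fixes u v :: real
  assumes "0 \<le> u" "u < v" "v \<le> pi/4"
  shows "cos (2 * v) * cos v < cos (2 * u) * cos u"
proof -
  have cos_lt: "cos v < cos u" using assms by (intro cos_monotone_0_pi) auto
  have cos2_lt: "cos (2 * v) < cos (2 * u)" using assms by (intro cos_monotone_0_pi) auto
  have cos2_nonneg: "cos (2 * v) \<ge> 0" using assms by (intro cos_ge_zero) auto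
  have cos_pos: "cos u > 0" using assms by (intro cos_gt_zero_pi) auto
  have "cos (2 * v) * cos v \<le> cos (2 * v) * cos u"
    using cos_lt cos2_nonneg by (intro mult_left_mono) auto
  also have "\<dots> < cos (2 * u) * cos u"
    using cos2_lt cos_pos by (intro mult_strict_right_mono) auto
  finally show ?thesis .
qed

lemma lemniscate_x_determines_abs_parameter:
  fixes a b :: real
  assumes "\<bar>a\<bar> \<le> pi/4" "\<bar>b\<bar> \<le> pi/4" and x_eq: "cos (2 * a) * cos a = cos (2 * b) * cos b"
  shows "\<bar>a\<bar> = \<bar>b\<bar>"
proof -
  have even: "cos (2 * \<bar>s\<bar>) * cos \<bar>s\<bar> = cos (2 * s) * cos s" for s :: real
    by (cases "s \<ge> 0") auto
  have "\<not> \<bar>a\<bar> < \<bar>b\<bar>" and "\<not> \<bar>b\<bar> < \<bar>a\<bar>"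
    using lemniscate_x_strict_decreasing[of "\<bar>a\<bar>" "\<bar>b\<bar>"]
      lemniscate_x_strict_decreasing[of "\<bar>b\<bar>" "\<bar>a\<bar>"] even[of a] even[of b] x_eq assms
    by auto
  then show ?thesis by linarith
qed

lemma half_lemniscate_vertical_chord:
  assumes "P \<in> half_lemniscate" "Q \<in> half_lemniscate" "fst P = fst Q" "P \<noteq> Q"
  shows "Q = (fst P, - snd P)"
proof -
  obtain s where s: "\<bar>s\<bar> \<le> pi/4" "P = (cos (2 * s) * cos s, cos (2 * s) * sin s)"
    using assms(1) unfolding half_lemniscate_def by auto
  obtain t where t: "\<bar>t\<bar> \<le> pi/4" "Q = (cos (2 * t) * cos t, cos (2 * t) * sin t)"
    using assms(2) unfolding half_lemniscate_def by auto
  have "\<bar>s\<bar> = \<bar>t\<bar>"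
    using lemniscate_x_determines_abs_parameter[OF s(1) t(1)] assms(3) s(2) t(2) by simp
  moreover have "s \<noteq> t" using assms(4) s(2) t(2) by auto
  ultimately have "t = - s" by linarith
  then show ?thesis using s(2) t(2) by simp
qed

text \<open>The curve lies in the strip 0 <= x <= 1 and in the cone y^2 <= x^2, since
  x^2 - y^2 = cos^2 2t * (cos^2 t - sin^2 t) = cos^3 2t.\<close>
lemma half_lemniscate_bounds:
  assumes "(x, y) \<in> half_lemniscate"
  shows "0 \<le> x" "x \<le> 1" "y\<^sup>2 \<le> x\<^sup>2"
proof -
  obtain t where t: "\<bar>t\<bar> \<le> pi/4" "x = cos (2 * t) * cos t" "y = cos (2 * t) * sin t"
    using assms unfolding half_lemniscate_def by auto
  have cos2_nonneg: "cos (2 * t) \<ge> 0" using t(1) by (intro cos_ge_zero) (auto simp: abs_le_iff)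
  have cos_nonneg: "cos t \<ge> 0" using t(1) pi_gt3 by (intro cos_ge_zero) (auto simp: abs_le_iff)
  show "0 \<le> x" using t(2) cos2_nonneg cos_nonneg by simp
  have "\<bar>x\<bar> \<le> 1" unfolding t(2) abs_mult by (intro mult_le_one) auto
  then show "x \<le> 1" by linarith
  have "x\<^sup>2 - y\<^sup>2 = (cos (2 * t))\<^sup>2 * ((cos t)\<^sup>2 - (sin t)\<^sup>2)"
    unfolding t(2,3) by (simp add: power_mult_distrib right_diff_distrib)
  also have "\<dots> = (cos (2 * t))\<^sup>2 * cos (2 * t)" by (simp add: cos_double)
  also have "\<dots> \<ge> 0" using cos2_nonneg by simp
  finally show "y\<^sup>2 \<le> x\<^sup>2" by simp
qed

lemma half_lemniscate_on_axis:
  assumes "(x, 0) \<in> half_lemniscate"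
  shows "x = 0 \<or> x = 1"
proof -
  obtain t where t: "\<bar>t\<bar> \<le> pi/4" "x = cos (2 * t) * cos t" "cos (2 * t) * sin t = 0"
    using assms unfolding half_lemniscate_def by auto
  from t(3) consider "cos (2 * t) = 0" | "sin t = 0" by auto
  then show ?thesis
  proof cases
    case 1
    then show ?thesis using t(2) by simp
  next
    case 2
    moreover have "- pi < t" "t < pi" using t(1) pi_gt3 by (auto simp: abs_le_iff)
    ultimately have "t = 0" using sin_eq_0_pi by blast
    then show ?thesis using t(2) by simp
  qed
qed

lemma no_inscribed_obtuse_isosceles:
  assumes on_curve: "P \<in> half_lemniscate" "Q \<in> half_lemniscate" "R \<in> half_lemniscate"
    and base: "P \<noteq> Q" "fst P = fst Q"
    and apex_left: "fst R < fst P"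
    and isosceles: "dist R P = dist R Q"
    and obtuse: "inner (P - R) (Q - R) < 0"
  shows False
proof -
  obtain a b where P: "P = (a, b)" by (cases P)
  have Q: "Q = (a, - b)" using half_lemniscate_vertical_chord[OF on_curve(1,2) base(2,1)] P by simp
  have "b \<noteq> 0" using base(1) P Q by auto
  obtain x y where R: "R = (x, y)" by (cases R)
  have "(x - a)\<^sup>2 + (y - b)\<^sup>2 = (x - a)\<^sup>2 + (y + b)\<^sup>2"
    using isosceles P Q R by (simp add: dist_Pair_Pair dist_real_def)
  then have "y * b = 0" by (simp add: power2_eq_square algebra_simps)
  with \<open>b \<noteq> 0\<close> have "y = 0" by simp
  have obtuse_xy: "(a - x)\<^sup>2 < b\<^sup>2"
    using obtuse P Q R \<open>y = 0\<close> by (simp add: inner_Pair power2_eq_square algebra_simps)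
  consider "x = 0" | "x = 1"
    using half_lemniscate_on_axis on_curve(3) R \<open>y = 0\<close> by blast
  then show False
  proof cases
    case 1
    then show False using obtuse_xy half_lemniscate_bounds(3)[of a b] on_curve(1) P by simp
  next
    case 2
    then show False using apex_left half_lemniscate_bounds(2)[of a b] on_curve(1) P R by simp
  qed
qed

lemma homothety_dist:
  fixes t X Y :: "'a :: real_normed_vector"
  shows "dist (t + c *\<^sub>R X) (t + c *\<^sub>R Y) = \<bar>c\<bar> * dist X Y"
  by (simp add: dist_norm scaleR_diff_right[symmetric])

lemma homothety_inner:
  fixes t X Y Z :: "'a :: real_inner"
  shows "inner (t + c *\<^sub>R X - (t + c *\<^sub>R Z)) (t + c *\<^sub>R Y - (t + c *\<^sub>R Z))
           = c * c * inner (X - Z) (Y - Z)"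
  by (simp add: scaleR_diff_right[symmetric])

theorem mainTheorem2:
  fixes A B C :: "real \<times> real"
  assumes "A \<noteq> B"
    and "dist C A = dist C B"
    and "fst A = fst B"
    and "fst C < fst A"
    and "inner (A - C) (B - C) < 0"
  shows "\<not> (\<exists>(c::real) (t::real \<times> real). c > 0 \<and>
            t + c *\<^sub>R A \<in> half_lemniscate \<and>
            t + c *\<^sub>R B \<in> half_lemniscate \<and>
            t + c *\<^sub>R C \<in> half_lemniscate)"
proof
  assume "\<exists>(c::real) (t::real \<times> real). c > 0 \<and>
            t + c *\<^sub>R A \<in> half_lemniscate \<and>
            t + c *\<^sub>R B \<in> half_lemniscate \<and>
            t + c *\<^sub>R C \<in> half_lemniscate"
  then obtain c t where c: "c > 0" and on_curve: "t + c *\<^sub>R A \<in> half_lemniscate"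
     "t + c *\<^sub>R B \<in> half_lemniscate" "t + c *\<^sub>R C \<in> half_lemniscate" by blast
  show False
  proof (rule no_inscribed_obtuse_isosceles[OF on_curve])
    show "t + c *\<^sub>R A \<noteq> t + c *\<^sub>R B" using assms(1) c by simp
    show "fst (t + c *\<^sub>R A) = fst (t + c *\<^sub>R B)" using assms(3) by simp
    show "fst (t + c *\<^sub>R C) < fst (t + c *\<^sub>R A)" using assms(4) c by simp
    show "dist (t + c *\<^sub>R C) (t + c *\<^sub>R A) = dist (t + c *\<^sub>R C) (t + c *\<^sub>R B)"
      unfolding homothety_dist using assms(2) by simp
    show "inner (t + c *\<^sub>R A - (t + c *\<^sub>R C)) (t + c *\<^sub>R B - (t + c *\<^sub>R C)) < 0"
      unfolding homothety_inner using assms(5) c by (simp add: mult_pos_neg)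
  qed
qed

end
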